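(* Let $R$ be a finite principal left ideal ring, $<$ a respectful order on $R$, $B$ an ordered basis of $R^n$, and $P$ a left multiplicative property on $R^n$ with $P[0]$ false. Then each code $C_i$ produced by the greedy algorithm is a free left $R$-module, and the vectors $a_j$ ($j\le i$) selected by the algorithm up to step $i$ form a basis of $C_i$.
   Context: $R^\ast$ is the unit group of $R$. A property $P:R^n\to\{\text{true},\text{false}\}$ is left multiplicative if $P[ux]=P[x]$ for all $u\in R^\ast$, $x\in R^n$. A total order $<$ on $R$ is respectful if for all nonzero $x,y\in R$ with $Rx\supsetneq Ry$ there is $\alpha\in R^\ast$ with $\alpha x<uy$ for all $u\in R^\ast$. Fix an ordered basis $B=(b_1,\dots,b_n)$ of the free left module $R^n$; put $V_0=\{0\}$ and $V_i=Rb_1+\dots+Rb_i$. The lexicographic order on $R^n$: if $x\in V_{i-1}$ and $y\in V_i\setminus V_{i-1}$ then $x<y$; if $x\ne y$ both lie in $V_i\setminus V_{i-1}$, write $x=\sum_{j\le i}x_jb_j$, $y=\sum_{j\le i}y_jb_j$, let $k$ be the largest index with $x_k\ne y_k$, and set $x<y$ iff $x_k<y_k$ in $R$. Fix a set $\Gamma\subseteq R$ containing one generator of each nonzero left ideal of $R$. Greedy algorithm: $C_0=\{0\}$; for $i=1,\dots,n$, let $a_i$ be the smallest vector of $V_i\setminus V_{i-1}$ (if any) such that $P[\gamma a_i+c]$ is true for all $\gamma\in\Gamma$ and all $c\in C_{i-1}$; if such $a_i$ exists ("is selected") set $C_i=Ra_i+C_{i-1}$, otherwise $C_i=C_{i-1}$.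 The lexicode is $C(<,B,P):=C_n$. *)

theory Defs
  imports Main
begin

text \<open>Vectors of R^n are functions nat => 'a supported on {..<n}; module operations
  are componentwise, with scalars acting from the left.\<close>

definition Rn :: "nat \<Rightarrow> (nat \<Rightarrow> 'a::zero) set" where
  "Rn n = {x. \<forall>k. n \<le> k \<longrightarrow> x k = 0}"

definition smult :: "'a::times \<Rightarrow> (nat \<Rightarrow> 'a) \<Rightarrow> (nat \<Rightarrow> 'a)" where
  "smult r x = (\<lambda>k. r * x k)"

definition vzero :: "nat \<Rightarrow> 'a::zero" where
  "vzero = (\<lambda>k. 0)"

definition lcomb :: "(nat \<Rightarrow> 'a::semiring_0) \<Rightarrow> (nat \<Rightarrow> nat \<Rightarrow> 'a) \<Rightarrow> nat set \<Rightarrow> (nat \<Rightarrow> 'a)" where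
  "lcomb c v J = (\<lambda>k. \<Sum>j\<in>J. c j * v j k)"

definition left_ideal :: "'a::ring_1 set \<Rightarrow> bool" where
  "left_ideal I \<longleftrightarrow> 0 \<in> I \<and> (\<forall>x\<in>I. \<forall>y\<in>I. x + y \<in> I) \<and> (\<forall>r x. x \<in> I \<longrightarrow> r * x \<in> I)"

definition principal_left_ideal_ring :: "'a::ring_1 itself \<Rightarrow> bool" where
  "principal_left_ideal_ring _ \<longleftrightarrow>
     (\<forall>I::'a set. left_ideal I \<longrightarrow> (\<exists>g. I = range (\<lambda>r. r * g)))"

definition unit_ring :: "'a::ring_1 \<Rightarrow> bool" where
  "unit_ring u \<longleftrightarrow> (\<exists>v. u * v = 1 \<and> v * u = 1)"

definition strict_total_order :: "('a \<Rightarrow> 'a \<Rightarrow> bool) \<Rightarrow> bool" where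
  "strict_total_order lt \<longleftrightarrow> (\<forall>x. \<not> lt x x) \<and> (\<forall>x y z. lt x y \<longrightarrow> lt y z \<longrightarrow> lt x z)
     \<and> (\<forall>x y. x \<noteq> y \<longrightarrow> lt x y \<or> lt y x)"

definition respectful :: "('a::ring_1 \<Rightarrow> 'a \<Rightarrow> bool) \<Rightarrow> bool" where
  "respectful lt \<longleftrightarrow> strict_total_order lt \<and>
     (\<forall>x y. x \<noteq> 0 \<longrightarrow> y \<noteq> 0 \<longrightarrow> range (\<lambda>r. r * y) \<subset> range (\<lambda>r. r * x) \<longrightarrow>
        (\<exists>\<alpha>. unit_ring \<alpha> \<and> (\<forall>u. unit_ring u \<longrightarrow> lt (\<alpha> * x) (u * y))))"

definition left_multiplicative :: "nat \<Rightarrow> ((nat \<Rightarrow> 'a::ring_1) \<Rightarrow> bool) \<Rightarrow> bool" where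
  "left_multiplicative n P \<longleftrightarrow> (\<forall>u x. unit_ring u \<longrightarrow> x \<in> Rn n \<longrightarrow> P (smult u x) = P x)"

definition ordered_basis :: "nat \<Rightarrow> (nat \<Rightarrow> nat \<Rightarrow> 'a::ring_1) \<Rightarrow> bool" where
  "ordered_basis n b \<longleftrightarrow> (\<forall>j\<in>{1..n}. b j \<in> Rn n) \<and>
     (\<forall>x\<in>Rn n. \<exists>!c. (\<forall>j. j \<notin> {1..n} \<longrightarrow> c j = 0) \<and> x = lcomb c b {1..n})"

definition Vsp :: "(nat \<Rightarrow> nat \<Rightarrow> 'a::ring_1) \<Rightarrow> nat \<Rightarrow> (nat \<Rightarrow> 'a) set" where
  "Vsp b i = {lcomb c b {1..i} | c. True}"

definition lex_less :: "('a::ring_1 \<Rightarrow> 'a \<Rightarrow> bool) \<Rightarrow> nat \<Rightarrow> (nat \<Rightarrow> nat \<Rightarrow> 'a)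
    \<Rightarrow> (nat \<Rightarrow> 'a) \<Rightarrow> (nat \<Rightarrow> 'a) \<Rightarrow> bool" where
  "lex_less lt n b x y \<longleftrightarrow> (\<exists>i\<in>{1..n}.
     (x \<in> Vsp b (i - 1) \<and> y \<in> Vsp b i - Vsp b (i - 1)) \<or>
     (x \<in> Vsp b i - Vsp b (i - 1) \<and> y \<in> Vsp b i - Vsp b (i - 1) \<and> x \<noteq> y \<and>
      (\<exists>cx cy. x = lcomb cx b {1..i} \<and> y = lcomb cy b {1..i} \<and>
         (let k = Max {j\<in>{1..i}. cx j \<noteq> cy j} in lt (cx k) (cy k)))))"

definition greedy_sel :: "('a::ring_1 \<Rightarrow> 'a \<Rightarrow> bool) \<Rightarrow> nat \<Rightarrow> (nat \<Rightarrow> nat \<Rightarrow> 'a)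
    \<Rightarrow> ((nat \<Rightarrow> 'a) \<Rightarrow> bool) \<Rightarrow> 'a set \<Rightarrow> nat \<Rightarrow> (nat \<Rightarrow> 'a) set \<Rightarrow> (nat \<Rightarrow> 'a) option" where
  "greedy_sel lt n b P \<Gamma> i C =
     (let S = {a \<in> Vsp b i - Vsp b (i - 1). \<forall>\<gamma>\<in>\<Gamma>. \<forall>c\<in>C. P (\<lambda>k. \<gamma> * a k + c k)} in
      if S = {} then None
      else Some (THE a. a \<in> S \<and> (\<forall>y\<in>S. y \<noteq> a \<longrightarrow> lex_less lt n b a y)))"

fun greedy_code :: "('a::ring_1 \<Rightarrow> 'a \<Rightarrow> bool) \<Rightarrow> nat \<Rightarrow> (nat \<Rightarrow> nat \<Rightarrow> 'a)
    \<Rightarrow> ((nat \<Rightarrow> 'a) \<Rightarrow> bool) \<Rightarrow> 'a set \<Rightarrow> nat \<Rightarrow> (nat \<Rightarrow> 'a) set" where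
  "greedy_code lt n b P \<Gamma> 0 = {vzero}"
| "greedy_code lt n b P \<Gamma> (Suc i) =
     (case greedy_sel lt n b P \<Gamma> (Suc i) (greedy_code lt n b P \<Gamma> i) of
        None \<Rightarrow> greedy_code lt n b P \<Gamma> i
      | Some a \<Rightarrow> {(\<lambda>k. r * a k + c k) | r c. c \<in> greedy_code lt n b P \<Gamma> i})"

definition selected :: "('a::ring_1 \<Rightarrow> 'a \<Rightarrow> bool) \<Rightarrow> nat \<Rightarrow> (nat \<Rightarrow> nat \<Rightarrow> 'a)
    \<Rightarrow> ((nat \<Rightarrow> 'a) \<Rightarrow> bool) \<Rightarrow> 'a set \<Rightarrow> nat \<Rightarrow> bool" where
  "selected lt n b P \<Gamma> j \<longleftrightarrow> greedy_sel lt n b P \<Gamma> j (greedy_code lt n b P \<Gamma> (j - 1)) \<noteq> None"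

definition sel_vec :: "('a::ring_1 \<Rightarrow> 'a \<Rightarrow> bool) \<Rightarrow> nat \<Rightarrow> (nat \<Rightarrow> nat \<Rightarrow> 'a)
    \<Rightarrow> ((nat \<Rightarrow> 'a) \<Rightarrow> bool) \<Rightarrow> 'a set \<Rightarrow> nat \<Rightarrow> nat \<Rightarrow> 'a" where
  "sel_vec lt n b P \<Gamma> j = the (greedy_sel lt n b P \<Gamma> j (greedy_code lt n b P \<Gamma> (j - 1)))"

definition generator_system :: "'a::ring_1 set \<Rightarrow> bool" where
  "generator_system \<Gamma> \<longleftrightarrow> (\<forall>\<gamma>\<in>\<Gamma>. \<gamma> \<noteq> 0) \<and>
     (\<forall>I. left_ideal I \<and> I \<noteq> {0} \<longrightarrow> (\<exists>!\<gamma>. \<gamma> \<in> \<Gamma> \<and> I = range (\<lambda>r. r * \<gamma>)))"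

end

theory Submission
  imports Defs "HOL-Library.FuncSet"
begin

text \<open>
  Assume the selected vectors up to step \<open>i - 1\<close> form a basis of \<open>C\<^sub>i\<^sub>-\<^sub>1\<close> and let \<open>a\<^sub>i\<close> be
  selected. The coefficients \<open>r\<close> with \<open>r a\<^sub>i \<in> C\<^sub>i\<^sub>-\<^sub>1\<close> form a left ideal; were it nonzero,
  its generator \<open>\<gamma> \<in> \<Gamma>\<close> would give \<open>\<gamma> a\<^sub>i \<in> C\<^sub>i\<^sub>-\<^sub>1\<close>, and the admissibility test with
  \<open>c = -\<gamma> a\<^sub>i\<close> would demand \<open>P[0]\<close>. Hence \<open>R a\<^sub>i \<inter> C\<^sub>i\<^sub>-\<^sub>1 = 0\<close>, so adding \<open>a\<^sub>i\<close> to the basis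
  keeps it independent.
\<close>

lemma finite_strict_total_ex1_least:
  assumes "finite S" "S \<noteq> {}"
    and irrefl: "\<And>x. x \<in> S \<Longrightarrow> \<not> R x x"
    and transR: "\<And>x y z. x \<in> S \<Longrightarrow> y \<in> S \<Longrightarrow> z \<in> S \<Longrightarrow> R x y \<Longrightarrow> R y z \<Longrightarrow> R x z"
    and total: "\<And>x y. x \<in> S \<Longrightarrow> y \<in> S \<Longrightarrow> x \<noteq> y \<Longrightarrow> R x y \<or> R y x"
  shows "\<exists>!a. a \<in> S \<and> (\<forall>y\<in>S. y \<noteq> a \<longrightarrow> R a y)"
proof (rule ex_ex1I)
  define r where "r = {(x, y). x \<in> S \<and> y \<in> S \<and> R x y}"
  have "r \<subseteq> S \<times> S" unfolding r_def by auto
  then have "finite r" using \<open>finite S\<close> by (simp add: finite_subset)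
  moreover have "trans r" unfolding r_def trans_def by (blast intro: transR)
  then have "acyclic r" using irrefl unfolding acyclic_irrefl r_def irrefl_def by simp
  ultimately have "wf r" by (rule finite_acyclic_wf)
  obtain x where "x \<in> S" using \<open>S \<noteq> {}\<close> by blast
  with \<open>wf r\<close> obtain a where a: "a \<in> S" and min: "\<And>y. (y, a) \<in> r \<Longrightarrow> y \<notin> S"
    by (rule wfE_min) blast
  have "R a y" if y: "y \<in> S" "y \<noteq> a" for y
  proof -
    have "\<not> R y a" using min[of y] a y(1) unfolding r_def by blast
    then show "R a y" using total[OF a y(1)] y(2) by metis
  qed
  then show "\<exists>a. a \<in> S \<and> (\<forall>y\<in>S. y \<noteq> a \<longrightarrow> R a y)" using a by blast
next
  fix a a'
  assume a: "a \<in> S \<and> (\<forall>y\<in>S. y \<noteq> a \<longrightarrow> R a y)" and a': "a' \<in> S \<and> (\<forall>y\<in>S. y \<noteq> a' \<longrightarrow> R a' y)"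
  show "a = a'"
  proof (rule ccontr)
    assume "a \<noteq> a'"
    then have "R a a'" "R a' a" using a a' by auto
    then show False using transR[of a a' a] irrefl[of a] a a' by blast
  qed
qed

lemma lcomb_cong: "(\<And>j. j \<in> J \<Longrightarrow> c j = d j) \<Longrightarrow> lcomb c v J = lcomb d v J"
  unfolding lcomb_def by (rule ext, rule sum.cong) auto

lemma lcomb_zero: "lcomb (\<lambda>j. 0) v J = vzero"
  unfolding lcomb_def vzero_def by simp

lemma lcomb_empty: "lcomb c v {} = vzero"
  unfolding lcomb_def vzero_def by simp

lemma lcomb_add: "(\<lambda>k. lcomb c v J k + lcomb d v J k) = lcomb (\<lambda>j. c j + d j) v J"
  unfolding lcomb_def by (simp add: sum.distrib distrib_right)

lemma smult_lcomb: "smult r (lcomb c v J) = lcomb (\<lambda>j. r * c j) v J"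
  unfolding smult_def lcomb_def by (simp add: sum_distrib_left mult.assoc)

lemma lcomb_insert:
  "finite J \<Longrightarrow> j \<notin> J \<Longrightarrow> lcomb c v (insert j J) = (\<lambda>k. c j * v j k + lcomb c v J k)"
  unfolding lcomb_def by simp

lemma lcomb_extend_zero:
  assumes "i \<le> k"
  shows "lcomb (\<lambda>t. if t \<in> {1..i} then c t else 0) b {1..k} = lcomb c b {1..i}"
  unfolding lcomb_def
  by (rule ext, rule sum.mono_neutral_cong_right) (use assms in auto)

subsection \<open>The flag \<open>V\<^sub>0 \<subseteq> V\<^sub>1 \<subseteq> \<dots>\<close>\<close>

lemma Vsp_mono:
  assumes "j \<le> k"
  shows "Vsp b j \<subseteq> Vsp b k"
proof
  fix x assume "x \<in> Vsp b j"
  then obtain c where "x = lcomb c b {1..j}" unfolding Vsp_def by blast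
  then have "x = lcomb (\<lambda>t. if t \<in> {1..j} then c t else 0) b {1..k}"
    using lcomb_extend_zero[OF assms, symmetric] by simp
  then show "x \<in> Vsp b k" unfolding Vsp_def by blast
qed

lemma Vsp_finite:
  assumes "finite (UNIV :: 'a::ring_1 set)"
  shows "finite (Vsp (b :: nat \<Rightarrow> nat \<Rightarrow> 'a) i)"
proof -
  have "Vsp b i \<subseteq> (\<lambda>c. lcomb c b {1..i}) ` (\<Pi>\<^sub>E t\<in>{1..i}. UNIV)"
  proof
    fix x assume "x \<in> Vsp b i"
    then obtain c where x: "x = lcomb c b {1..i}" unfolding Vsp_def by auto
    then have "x = lcomb (restrict c {1..i}) b {1..i}" by (auto intro: lcomb_cong)
    then show "x \<in> (\<lambda>c. lcomb c b {1..i}) ` (\<Pi>\<^sub>E t\<in>{1..i}. UNIV)" by force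
  qed
  moreover have "finite (\<Pi>\<^sub>E t\<in>{1..i}. (UNIV :: 'a set))"
    using assms by (intro finite_PiE) auto
  ultimately show ?thesis by (rule finite_subset[OF _ finite_imageI])
qed

lemma layer_unique:
  "x \<in> Vsp b i - Vsp b (i - 1) \<Longrightarrow> x \<in> Vsp b i' - Vsp b (i' - 1) \<Longrightarrow> i = i'"
  using Vsp_mono[of i "i' - 1" b] Vsp_mono[of i' "i - 1" b]
  by (cases "i \<le> i' - 1 \<or> i' \<le> i - 1") auto

lemma ordered_basis_coeff_unique:
  assumes ob: "ordered_basis n b" and "i \<le> n"
    and eq: "lcomb c b {1..i} = lcomb d b {1..i}" and j: "j \<in> {1..i}"
  shows "c j = d j"
proof -
  define c' where "c' = (\<lambda>t. if t \<in> {1..i} then c t else 0)"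
  define d' where "d' = (\<lambda>t. if t \<in> {1..i} then d t else 0)"
  have "lcomb c b {1..i} \<in> Rn n"
    using ob \<open>i \<le> n\<close> unfolding ordered_basis_def Rn_def lcomb_def by auto
  then have "\<exists>!e. (\<forall>t. t \<notin> {1..n} \<longrightarrow> e t = 0) \<and> lcomb c b {1..i} = lcomb e b {1..n}"
    using ob unfolding ordered_basis_def by blast
  moreover have "lcomb c' b {1..n} = lcomb c b {1..i}" "lcomb d' b {1..n} = lcomb c b {1..i}"
    unfolding c'_def d'_def using lcomb_extend_zero[OF \<open>i \<le> n\<close>] eq by metis+
  moreover have "\<forall>t. t \<notin> {1..n} \<longrightarrow> c' t = 0" "\<forall>t. t \<notin> {1..n} \<longrightarrow> d' t = 0"
    using \<open>i \<le> n\<close> unfolding c'_def d'_def by auto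
  ultimately have "c' = d'" by metis
  then show ?thesis using j unfolding c'_def d'_def by (metis (full_types))
qed

lemma ordered_basis_lcomb_eq_iff:
  assumes "ordered_basis n b" and "i \<le> n"
  shows "lcomb c b {1..i} = lcomb d b {1..i} \<longleftrightarrow> (\<forall>j\<in>{1..i}. c j = d j)"
  using ordered_basis_coeff_unique[OF assms] lcomb_cong by metis

subsection \<open>The lexicographic order on a layer \<open>V\<^sub>i - V\<^sub>i\<^sub>-\<^sub>1\<close>\<close>

definition coeff_lex :: "('a \<Rightarrow> 'a \<Rightarrow> bool) \<Rightarrow> nat \<Rightarrow> (nat \<Rightarrow> 'a) \<Rightarrow> (nat \<Rightarrow> 'a) \<Rightarrow> bool" where
  "coeff_lex lt i c d \<longleftrightarrow> {j\<in>{1..i}. c j \<noteq> d j} \<noteq> {} \<and>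
     (let k = Max {j\<in>{1..i}. c j \<noteq> d j} in lt (c k) (d k))"

lemma coeff_lex_cong:
  assumes c: "\<And>j. j \<in> {1..i} \<Longrightarrow> c j = c' j" and d: "\<And>j. j \<in> {1..i} \<Longrightarrow> d j = d' j"
  shows "coeff_lex lt i c d = coeff_lex lt i c' d'"
proof -
  let ?D = "{j\<in>{1..i}. c' j \<noteq> d' j}"
  have D: "{j\<in>{1..i}. c j \<noteq> d j} = ?D" using c d by auto
  show ?thesis
  proof (cases "?D = {}")
    case True
    then show ?thesis unfolding coeff_lex_def D by simp
  next
    case False
    have "Max ?D \<in> ?D" by (rule Max_in[OF _ False]) simp
    then show ?thesis unfolding coeff_lex_def Let_def D using c d by simp
  qed
qed

text \<open>Irreflexivity of \<open>lt\<close> forces the position \<open>k\<close> on the right to be the largest one where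
  \<open>c\<close> and \<open>d\<close> differ.\<close>

lemma coeff_lex_iff:
  assumes irrefl: "\<And>x. \<not> lt x x"
  shows "coeff_lex lt i c d \<longleftrightarrow> (\<exists>k\<in>{1..i}. lt (c k) (d k) \<and> (\<forall>j\<in>{1..i}. k < j \<longrightarrow> c j = d j))"
    (is "?lhs \<longleftrightarrow> ?rhs")
proof
  let ?D = "{j\<in>{1..i}. c j \<noteq> d j}"
  have fin: "finite ?D" by simp
  assume ?lhs
  then have ne: "?D \<noteq> {}" and lt: "lt (c (Max ?D)) (d (Max ?D))"
    unfolding coeff_lex_def Let_def by auto
  have "Max ?D \<in> ?D" using fin ne by (rule Max_in)
  moreover have "c j = d j" if j: "j \<in> {1..i}" "Max ?D < j" for j
  proof (rule ccontr)
    assume "c j \<noteq> d j"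
    then have "j \<le> Max ?D" using fin j(1) by (intro Max_ge) simp_all
    then show False using j(2) by simp
  qed
  ultimately show ?rhs using lt by blast
next
  let ?D = "{j\<in>{1..i}. c j \<noteq> d j}"
  have fin: "finite ?D" by simp
  assume ?rhs
  then obtain k where k: "k \<in> {1..i}" "lt (c k) (d k)" "\<forall>j\<in>{1..i}. k < j \<longrightarrow> c j = d j"
    by blast
  then have kD: "k \<in> ?D" using irrefl by fastforce
  have "Max ?D = k"
  proof (rule Max_eqI[OF fin _ kD])
    show "j \<le> k" if "j \<in> ?D" for j using that k(3) not_less by blast
  qed
  then show ?lhs unfolding coeff_lex_def Let_def using kD k(2) by auto
qed

lemma coeff_lex_strict_total_order:
  assumes sto: "strict_total_order lt"
  shows "\<not> coeff_lex lt i c c"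
    and "coeff_lex lt i c d \<Longrightarrow> coeff_lex lt i d e \<Longrightarrow> coeff_lex lt i c e"
    and "\<exists>j\<in>{1..i}. c j \<noteq> d j \<Longrightarrow> coeff_lex lt i c d \<or> coeff_lex lt i d c"
proof -
  have irrefl: "\<And>x. \<not> lt x x" and trans: "\<And>x y z. lt x y \<Longrightarrow> lt y z \<Longrightarrow> lt x z"
    and total: "\<And>x y. x \<noteq> y \<Longrightarrow> lt x y \<or> lt y x"
    using sto unfolding strict_total_order_def by blast+
  note lex = coeff_lex_iff[of lt, OF irrefl]
  show "\<not> coeff_lex lt i c c" unfolding lex using irrefl by simp
  show "coeff_lex lt i c e" if cd: "coeff_lex lt i c d" and de: "coeff_lex lt i d e"
  proof -
    obtain k1 where k1: "k1 \<in> {1..i}" "lt (c k1) (d k1)" "\<forall>j\<in>{1..i}. k1 < j \<longrightarrow> c j = d j"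
      using cd unfolding lex by blast
    obtain k2 where k2: "k2 \<in> {1..i}" "lt (d k2) (e k2)" "\<forall>j\<in>{1..i}. k2 < j \<longrightarrow> d j = e j"
      using de unfolding lex by blast
    have "lt (c (max k1 k2)) (e (max k1 k2))"
      using k1 k2 trans by (cases k1 k2 rule: linorder_cases) (auto simp: max_def)
    moreover have "max k1 k2 \<in> {1..i}" using k1(1) k2(1) by (simp add: max_def)
    moreover have "\<forall>j\<in>{1..i}. max k1 k2 < j \<longrightarrow> c j = e j" using k1(3) k2(3) by simp
    ultimately show ?thesis unfolding lex by blast
  qed
  show "coeff_lex lt i c d \<or> coeff_lex lt i d c" if "\<exists>j\<in>{1..i}. c j \<noteq> d j"
  proof -
    let ?D = "{j\<in>{1..i}. c j \<noteq> d j}"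
    have "Max ?D \<in> ?D" using that by (intro Max_in) auto
    then have "lt (c (Max ?D)) (d (Max ?D)) \<or> lt (d (Max ?D)) (c (Max ?D))" by (intro total) simp
    moreover have "{j\<in>{1..i}. d j \<noteq> c j} = ?D" by auto
    ultimately show ?thesis using that unfolding coeff_lex_def Let_def by auto
  qed
qed

lemma lex_less_layer_iff:
  assumes ob: "ordered_basis n b" and i: "i \<in> {1..n}"
    and x: "x \<in> Vsp b i - Vsp b (i - 1)" and y: "y \<in> Vsp b i - Vsp b (i - 1)"
    and cx: "x = lcomb cx b {1..i}" and cy: "y = lcomb cy b {1..i}"
  shows "lex_less lt n b x y \<longleftrightarrow> coeff_lex lt i cx cy"
proof
  note coeff_eq = ordered_basis_lcomb_eq_iff[OF ob, of i]
  assume "lex_less lt n b x y"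
  then obtain i' where "i' \<in> {1..n}" and disj: "(x \<in> Vsp b (i' - 1) \<and> y \<in> Vsp b i' - Vsp b (i' - 1)) \<or>
     (x \<in> Vsp b i' - Vsp b (i' - 1) \<and> y \<in> Vsp b i' - Vsp b (i' - 1) \<and> x \<noteq> y \<and>
      (\<exists>cx cy. x = lcomb cx b {1..i'} \<and> y = lcomb cy b {1..i'} \<and>
         (let k = Max {j\<in>{1..i'}. cx j \<noteq> cy j} in lt (cx k) (cy k))))"
    unfolding lex_less_def by blast
  have "y \<in> Vsp b i' - Vsp b (i' - 1)" using disj by blast
  then have "i' = i" using layer_unique[OF y] by blast
  with disj x obtain cx' cy' where "x \<noteq> y" and cx': "x = lcomb cx' b {1..i}"
    and cy': "y = lcomb cy' b {1..i}"
    and "let k = Max {j\<in>{1..i}. cx' j \<noteq> cy' j} in lt (cx' k) (cy' k)"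
    by auto
  moreover have "{j\<in>{1..i}. cx' j \<noteq> cy' j} \<noteq> {}"
    using \<open>x \<noteq> y\<close> coeff_eq cx' cy' i by auto
  ultimately have "coeff_lex lt i cx' cy'" unfolding coeff_lex_def by blast
  moreover have "coeff_lex lt i cx' cy' = coeff_lex lt i cx cy"
    using coeff_eq cx cx' cy cy' i by (intro coeff_lex_cong) auto
  ultimately show "coeff_lex lt i cx cy" by simp
next
  assume lex: "coeff_lex lt i cx cy"
  then have "x \<noteq> y"
    using ordered_basis_lcomb_eq_iff[OF ob, of i cx cy] i cx cy unfolding coeff_lex_def by auto
  with x y cx cy lex have "x \<in> Vsp b i - Vsp b (i - 1) \<and> y \<in> Vsp b i - Vsp b (i - 1) \<and> x \<noteq> y \<and>
      (\<exists>cx cy. x = lcomb cx b {1..i} \<and> y = lcomb cy b {1..i} \<and>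
         (let k = Max {j\<in>{1..i}. cx j \<noteq> cy j} in lt (cx k) (cy k)))"
    unfolding coeff_lex_def by blast
  then show "lex_less lt n b x y" unfolding lex_less_def using i by blast
qed

lemma lex_less_layer_strict_total:
  assumes ob: "ordered_basis n b" and i: "i \<in> {1..n}" and sto: "strict_total_order lt"
  defines "W \<equiv> Vsp b i - Vsp b (i - 1)"
  shows "x \<in> W \<Longrightarrow> \<not> lex_less lt n b x x"
    and "x \<in> W \<Longrightarrow> y \<in> W \<Longrightarrow> z \<in> W \<Longrightarrow> lex_less lt n b x y \<Longrightarrow> lex_less lt n b y z
          \<Longrightarrow> lex_less lt n b x z"
    and "x \<in> W \<Longrightarrow> y \<in> W \<Longrightarrow> x \<noteq> y \<Longrightarrow> lex_less lt n b x y \<or> lex_less lt n b y x"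
proof -
  have coeffs: "\<exists>c. x = lcomb c b {1..i}" if "x \<in> W" for x
    using that unfolding W_def Vsp_def by blast
  note lex = lex_less_layer_iff[OF ob i, folded W_def]
  note coeff_lex = coeff_lex_strict_total_order[OF sto, of i]
  show "\<not> lex_less lt n b x x" if "x \<in> W"
    using coeffs[OF that] lex[OF that that] coeff_lex(1) by blast
  show "lex_less lt n b x z"
    if xyz: "x \<in> W" "y \<in> W" "z \<in> W" and "lex_less lt n b x y" "lex_less lt n b y z"
  proof -
    obtain cx cy cz where "x = lcomb cx b {1..i}" "y = lcomb cy b {1..i}" "z = lcomb cz b {1..i}"
      using coeffs xyz by meson
    with that coeff_lex(2)[of cx cy cz] show ?thesis using lex by blast
  qed
  show "lex_less lt n b x y \<or> lex_less lt n b y x" if x: "x \<in> W" and y: "y \<in> W" and "x \<noteq> y"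
  proof -
    obtain cx cy where cx: "x = lcomb cx b {1..i}" and cy: "y = lcomb cy b {1..i}"
      using coeffs x y by blast
    then have "\<exists>j\<in>{1..i}. cx j \<noteq> cy j"
      using ordered_basis_lcomb_eq_iff[OF ob, of i cx cy] i \<open>x \<noteq> y\<close> by auto
    then show ?thesis using coeff_lex(3) lex[OF x y cx cy] lex[OF y x cy cx] by blast
  qed
qed

lemma greedy_sel_SomeD:
  fixes lt :: "'a::{ring_1,finite} \<Rightarrow> 'a \<Rightarrow> bool"
  assumes ob: "ordered_basis n b" and sto: "strict_total_order lt" and i: "i \<in> {1..n}"
    and sel: "greedy_sel lt n b P \<Gamma> i C = Some a"
  shows "a \<in> Vsp b i - Vsp b (i - 1) \<and> (\<forall>\<gamma>\<in>\<Gamma>. \<forall>c\<in>C. P (\<lambda>k. \<gamma> * a k + c k))"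
proof -
  define S where "S = {a \<in> Vsp b i - Vsp b (i - 1). \<forall>\<gamma>\<in>\<Gamma>. \<forall>c\<in>C. P (\<lambda>k. \<gamma> * a k + c k)}"
  have sel': "(if S = {} then None
      else Some (THE a. a \<in> S \<and> (\<forall>y\<in>S. y \<noteq> a \<longrightarrow> lex_less lt n b a y))) = Some a"
    using sel unfolding greedy_sel_def Let_def S_def by simp
  then have "S \<noteq> {}" by (cases "S = {}") auto
  with sel' have a: "a = (THE a. a \<in> S \<and> (\<forall>y\<in>S. y \<noteq> a \<longrightarrow> lex_less lt n b a y))" by simp
  have layer: "S \<subseteq> Vsp b i - Vsp b (i - 1)" unfolding S_def by blast
  then have "finite S" by (rule finite_subset) (intro finite_Diff Vsp_finite, simp)
  note lex = lex_less_layer_strict_total[OF ob i sto]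
  have "\<exists>!a. a \<in> S \<and> (\<forall>y\<in>S. y \<noteq> a \<longrightarrow> lex_less lt n b a y)"
  proof (rule finite_strict_total_ex1_least[OF \<open>finite S\<close> \<open>S \<noteq> {}\<close>])
    show "\<not> lex_less lt n b x x" if "x \<in> S" for x using that layer lex(1) by blast
    show "lex_less lt n b x z" if "x \<in> S" "y \<in> S" "z \<in> S" "lex_less lt n b x y" "lex_less lt n b y z"
      for x y z using that layer lex(2)[of x y z] by blast
    show "lex_less lt n b x y \<or> lex_less lt n b y x" if "x \<in> S" "y \<in> S" "x \<noteq> y" for x y
      using that layer lex(3)[of x y] by blast
  qed
  then have "a \<in> S" unfolding a by (rule theI'[THEN conjunct1])
  then show ?thesis unfolding S_def by blast
qed

subsection \<open>Independence of the selected vectors\<close>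

definition left_submodule :: "(nat \<Rightarrow> 'a::ring_1) set \<Rightarrow> bool" where
  "left_submodule C \<longleftrightarrow> vzero \<in> C \<and> (\<forall>x\<in>C. \<forall>y\<in>C. (\<lambda>k. x k + y k) \<in> C) \<and> (\<forall>r. \<forall>x\<in>C. smult r x \<in> C)"

lemma left_submodule_span: "left_submodule {lcomb c v J | c. True}"
  unfolding left_submodule_def
proof (intro conjI ballI allI)
  show "vzero \<in> {lcomb c v J | c. True}" using lcomb_zero[symmetric] by blast
  fix x y r assume "x \<in> {lcomb c v J | c. True}" "y \<in> {lcomb c v J | c. True}"
  then obtain cx cy where "x = lcomb cx v J" "y = lcomb cy v J" by blast
  then show "(\<lambda>k. x k + y k) \<in> {lcomb c v J | c. True}" and "smult r x \<in> {lcomb c v J | c. True}"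
    by (simp_all only: lcomb_add smult_lcomb) blast+
qed

lemma left_submodule_annihilator_left_ideal:
  assumes "left_submodule C"
  shows "left_ideal {r. smult r a \<in> C}"
proof -
  have "smult (r + s) a = (\<lambda>k. smult r a k + smult s a k)" for r s
    unfolding smult_def by (simp add: distrib_right)
  moreover have "smult (r * s) a = smult r (smult s a)" for r s
    unfolding smult_def by (simp add: mult.assoc)
  moreover have "smult 0 a = vzero" unfolding smult_def vzero_def by simp
  ultimately show ?thesis using assms unfolding left_ideal_def left_submodule_def by auto
qed

lemma admissible_smult_mem_eq_zero:
  assumes C: "left_submodule C" and \<Gamma>: "generator_system \<Gamma>" and "\<not> P vzero"
    and admissible: "\<forall>\<gamma>\<in>\<Gamma>. \<forall>c\<in>C. P (\<lambda>k. \<gamma> * a k + c k)"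
    and "smult r a \<in> C"
  shows "r = 0"
proof (rule ccontr)
  let ?I = "{r. smult r a \<in> C}"
  assume "r \<noteq> 0"
  with \<open>smult r a \<in> C\<close> have "left_ideal ?I \<and> ?I \<noteq> {0}"
    using left_submodule_annihilator_left_ideal[OF C] by blast
  then have "\<exists>!\<gamma>. \<gamma> \<in> \<Gamma> \<and> ?I = range (\<lambda>r. r * \<gamma>)"
    using \<Gamma> unfolding generator_system_def by blast
  then obtain \<gamma> where "\<gamma> \<in> \<Gamma>" and I: "?I = range (\<lambda>r. r * \<gamma>)" by auto
  have "\<gamma> \<in> ?I" unfolding I by (rule range_eqI[of _ _ 1]) simp
  then have "smult (-1) (smult \<gamma> a) \<in> C" using C unfolding left_submodule_def by simp
  then have "P (\<lambda>k. \<gamma> * a k + smult (-1) (smult \<gamma> a) k)"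
    using admissible \<open>\<gamma> \<in> \<Gamma>\<close> by simp
  moreover have "(\<lambda>k. \<gamma> * a k + smult (-1) (smult \<gamma> a) k) = vzero"
    unfolding smult_def vzero_def by simp
  ultimately show False using \<open>\<not> P vzero\<close> by simp
qed

lemma admissible_extends_basis:
  assumes "finite J" "j \<notin> J"
    and indep: "\<forall>c. lcomb c v J = vzero \<longrightarrow> (\<forall>i\<in>J. c i = 0)"
    and \<Gamma>: "generator_system \<Gamma>" and nP: "\<not> P vzero"
    and admissible: "\<forall>\<gamma>\<in>\<Gamma>. \<forall>c\<in>{lcomb c v J | c. True}. P (\<lambda>k. \<gamma> * v j k + c k)"
  shows "\<forall>c. lcomb c v (insert j J) = vzero \<longrightarrow> (\<forall>i\<in>insert j J. c i = 0)"
    and "{(\<lambda>k. r * v j k + x k) | r x. x \<in> {lcomb c v J | c. True}}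
          = {lcomb c v (insert j J) | c. True}"
proof -
  let ?C = "{lcomb c v J | c. True}"
  have lc: "lcomb c v (insert j J) = (\<lambda>k. c j * v j k + lcomb c v J k)" for c
    using assms(1,2) by (rule lcomb_insert)
  have C: "left_submodule ?C" by (rule left_submodule_span)
  show "\<forall>c. lcomb c v (insert j J) = vzero \<longrightarrow> (\<forall>i\<in>insert j J. c i = 0)"
  proof (intro allI impI)
    fix c assume c: "lcomb c v (insert j J) = vzero"
    then have "smult (c j) (v j) = smult (-1) (lcomb c v J)"
      unfolding lc smult_def vzero_def by (simp add: fun_eq_iff eq_neg_iff_add_eq_0)
    moreover have "smult (-1) (lcomb c v J) \<in> ?C" using C unfolding left_submodule_def by blast
    ultimately have "c j = 0" using admissible_smult_mem_eq_zero[OF C \<Gamma> nP admissible] by simp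
    moreover from this have "lcomb c v J = vzero" using c unfolding lc by simp
    ultimately show "\<forall>i\<in>insert j J. c i = 0" using indep by simp
  qed
  show "{(\<lambda>k. r * v j k + x k) | r x. x \<in> ?C} = {lcomb c v (insert j J) | c. True}"
  proof (intro set_eqI iffI)
    fix x assume "x \<in> {(\<lambda>k. r * v j k + x k) | r x. x \<in> ?C}"
    then obtain r d where x: "x = (\<lambda>k. r * v j k + lcomb d v J k)" by blast
    have "lcomb d v J = lcomb (d(j := r)) v J" using assms(2) by (intro lcomb_cong) auto
    then have "x = lcomb (d(j := r)) v (insert j J)" unfolding x lc by simp
    then show "x \<in> {lcomb c v (insert j J) | c. True}" by blast
  next
    fix x assume "x \<in> {lcomb c v (insert j J) | c. True}"
    then show "x \<in> {(\<lambda>k. r * v j k + x k) | r x. x \<in> ?C}" unfolding lc by blast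
  qed
qed

lemma greedy_code_free_basis:
  fixes lt :: "'a::{ring_1,finite} \<Rightarrow> 'a \<Rightarrow> bool"
  assumes ob: "ordered_basis n b" and sto: "strict_total_order lt"
    and nP: "\<not> P vzero" and \<Gamma>: "generator_system \<Gamma>"
  shows "i \<le> n \<Longrightarrow>
      (\<forall>c. lcomb c (sel_vec lt n b P \<Gamma>) {j\<in>{1..i}. selected lt n b P \<Gamma> j} = vzero
              \<longrightarrow> (\<forall>j\<in>{j\<in>{1..i}. selected lt n b P \<Gamma> j}. c j = 0))
       \<and> greedy_code lt n b P \<Gamma> i =
           {lcomb c (sel_vec lt n b P \<Gamma>) {j\<in>{1..i}. selected lt n b P \<Gamma> j} | c. True}"
proof (induction i)
  case 0
  then show ?case by (simp add: lcomb_empty)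
next
  case (Suc i)
  let ?a = "sel_vec lt n b P \<Gamma>"
  let ?J = "{j\<in>{1..i}. selected lt n b P \<Gamma> j}"
  let ?C = "greedy_code lt n b P \<Gamma> i"
  have indep: "\<forall>c. lcomb c ?a ?J = vzero \<longrightarrow> (\<forall>j\<in>?J. c j = 0)"
    and span: "?C = {lcomb c ?a ?J | c. True}"
    using Suc by auto
  show ?case
  proof (cases "greedy_sel lt n b P \<Gamma> (Suc i) ?C")
    case None
    then have "{j\<in>{1..Suc i}. selected lt n b P \<Gamma> j} = ?J"
      unfolding selected_def by (auto simp: le_Suc_eq)
    moreover have "greedy_code lt n b P \<Gamma> (Suc i) = ?C" using None by simp
    ultimately show ?thesis using indep span by simp
  next
    case (Some a)
    then have J: "{j\<in>{1..Suc i}. selected lt n b P \<Gamma> j} = insert (Suc i) ?J"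
      unfolding selected_def by (auto simp: le_Suc_eq)
    have a: "?a (Suc i) = a" unfolding sel_vec_def using Some by simp
    have "\<forall>\<gamma>\<in>\<Gamma>. \<forall>c\<in>?C. P (\<lambda>k. \<gamma> * a k + c k)"
      using greedy_sel_SomeD[OF ob sto _ Some] Suc.prems by simp
    then have "\<forall>\<gamma>\<in>\<Gamma>. \<forall>c\<in>{lcomb c ?a ?J | c. True}. P (\<lambda>k. \<gamma> * ?a (Suc i) k + c k)"
      unfolding span a .
    note extend = admissible_extends_basis[of ?J "Suc i" ?a, OF _ _ indep \<Gamma> nP this]
    moreover have "greedy_code lt n b P \<Gamma> (Suc i) = {(\<lambda>k. r * a k + x k) | r x. x \<in> ?C}"
      using Some by simp
    ultimately show ?thesis unfolding J span a by simp
  qed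
qed

theorem mainTheorem9:
  fixes lt :: "'a::{ring_1,finite} \<Rightarrow> 'a \<Rightarrow> bool"
    and n :: nat
    and b :: "nat \<Rightarrow> nat \<Rightarrow> 'a"
    and P :: "(nat \<Rightarrow> 'a) \<Rightarrow> bool"
    and \<Gamma> :: "'a set"
  assumes "principal_left_ideal_ring TYPE('a)"
    and "respectful lt"
    and "ordered_basis n b"
    and "left_multiplicative n P"
    and "\<not> P vzero"
    and "generator_system \<Gamma>"
    and "i \<le> n"
  shows "(\<forall>c. lcomb c (sel_vec lt n b P \<Gamma>) {j\<in>{1..i}. selected lt n b P \<Gamma> j} = vzero
              \<longrightarrow> (\<forall>j\<in>{j\<in>{1..i}. selected lt n b P \<Gamma> j}. c j = 0))
       \<and> greedy_code lt n b P \<Gamma> i =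
           {lcomb c (sel_vec lt n b P \<Gamma>) {j\<in>{1..i}. selected lt n b P \<Gamma> j} | c. True}"
proof -
  have "strict_total_order lt" using \<open>respectful lt\<close> unfolding respectful_def by simp
  then show ?thesis using greedy_code_free_basis assms(3,5-7) by blast
qed

end
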